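(* Let $n\ge 1$, let $a_1,\dots,a_n>0$ and $p_1,\dots,p_n>0$ be real numbers, and let $0<r\leq s$. Define $$M_r(a,p)=\left(\frac{\sum_{i=1}^n p_i a_i^r}{\sum_{i=1}^n p_i}\right)^{1/r},\qquad M_s(a,p)=\left(\frac{\sum_{i=1}^n p_i a_i^s}{\sum_{i=1}^n p_i}\right)^{1/s},$$ $$A=\frac{r(s-r)}{2s^2}[M_s(a,p)]^r\cdot\frac{\sum_{i=1}^n p_i\left(\frac{a_i^s}{[M_s(a,p)]^s}-1\right)^2}{\sum_{i=1}^n p_i},$$ $$m=\min\left\{1,\ \frac{a_1^s}{[M_s(a,p)]^s},\dots,\frac{a_n^s}{[M_s(a,p)]^s}\right\},\qquad M=\max\left\{1,\ \frac{a_1^s}{[M_s(a,p)]^s},\dots,\frac{a_n^s}{[M_s(a,p)]^s}\right\}.$$ Then $$\frac{A}{M}\leq[M_s(a,p)]^r-[M_r(a,p)]^r\leq\frac{A}{m}.$$ *)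

theory Defs
  imports Complex_Main
begin

definition power_mean :: "nat \<Rightarrow> real \<Rightarrow> (nat \<Rightarrow> real) \<Rightarrow> (nat \<Rightarrow> real) \<Rightarrow> real" where
  "power_mean n t a p =
     ((\<Sum>i=1..n. p i * a i powr t) / (\<Sum>i=1..n. p i)) powr (1 / t)"

end

theory Submission
  imports Defs
begin

(* Normalise x_i = a_i^s / M_s^s, so that the weighted mean of the x_i is 1, and put q = r/s in (0,1].
   Then M_s^r - M_r^r = (M_s^r / sum p) * sum_i p_i * f(x_i), where f(y) = 1 + q(y - 1) - y^q is the
   defect of the tangent-line inequality y^q <= 1 + q(y - 1) of the concave function y^q at y = 1.
   Since f(1) = f'(1) = 0 and f''(y) = q(1-q) y^(q-2) lies between q(1-q) and q(1-q)/y^3, comparing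
   second derivatives (Taylor's theorem of order two) with C(y-1)^2 and C(y-1)^2/y, C = q(1-q)/2, yields
       C (y-1)^2 / max 1 y  <=  f(y)  <=  C (y-1)^2 / min 1 y.
   Summing with the weights and bounding max 1 x_i <= M, min 1 x_i >= m gives the theorem. *)

text \<open>This is Taylor's theorem of order two applied to their difference.\<close>
lemma second_order_comparison:
  fixes g g' g'' h h' h'' :: "real \<Rightarrow> real" and c x :: real
  defines "I \<equiv> {min c x..max c x}"
  assumes g: "\<And>t. t \<in> I \<Longrightarrow> DERIV g t :> g' t" "\<And>t. t \<in> I \<Longrightarrow> DERIV g' t :> g'' t"
    and h: "\<And>t. t \<in> I \<Longrightarrow> DERIV h t :> h' t" "\<And>t. t \<in> I \<Longrightarrow> DERIV h' t :> h'' t"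
    and at_c: "g c = h c" "g' c = h' c"
    and second: "\<And>t. t \<in> I \<Longrightarrow> g'' t \<le> h'' t"
  shows "g x \<le> h x"
proof (cases "x = c")
  case True
  with at_c show ?thesis by simp
next
  case False
  define diff where "diff k = [\<lambda>t. h t - g t, \<lambda>t. h' t - g' t, \<lambda>t. h'' t - g'' t] ! k" for k
  have "\<forall>k t. k < 2 \<and> min c x \<le> t \<and> t \<le> max c x \<longrightarrow> DERIV (diff k) t :> diff (Suc k) t"
  proof (intro allI impI)
    fix k :: nat and t :: real assume "k < 2 \<and> min c x \<le> t \<and> t \<le> max c x"
    then have "k = 0 \<or> k = 1" and "t \<in> I" by (auto simp: I_def)
    then show "DERIV (diff k) t :> diff (Suc k) t"
      using g h by (auto simp: diff_def intro!: DERIV_diff)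
  qed
  from Taylor[of 2 diff "\<lambda>t. h t - g t", OF _ _ this _ _ _ _ False]
  obtain t where between: "if x < c then x < t \<and> t < c else c < t \<and> t < x"
    and expansion: "h x - g x = (\<Sum>k<2. diff k c / fact k * (x - c)^k) + diff 2 t / fact 2 * (x - c)^2"
    by (auto simp: diff_def)
  have t: "t \<in> I" using between by (auto simp: I_def split: if_splits)
  have taylor: "h x - g x = (h c - g c) + (h' c - g' c) * (x - c) + (h'' t - g'' t) / 2 * (x - c)^2"
    using expansion by (simp add: diff_def numeral_2_eq_2)
  have "0 \<le> (h'' t - g'' t) / 2 * (x - c)^2" using second[OF t] by simp
  with taylor at_c show ?thesis by simp
qed

definition jensen_defect :: "real \<Rightarrow> real \<Rightarrow> real" where
  "jensen_defect q y = 1 + q * (y - 1) - y powr q"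

lemma jensen_defect_derivatives:
  fixes q t :: real
  assumes "0 < t"
  shows "DERIV (jensen_defect q) t :> q - q * t powr (q - 1)"
    and "DERIV (\<lambda>y. q - q * y powr (q - 1)) t :> q * (1 - q) * t powr (q - 2)"
  using assms unfolding jensen_defect_def
  by (auto intro!: derivative_eq_intros simp: algebra_simps)

lemma quadratic_derivatives:
  fixes C t :: real
  shows "DERIV (\<lambda>y. C * (y - 1)^2) t :> 2 * C * (t - 1)"
    and "DERIV (\<lambda>y. 2 * C * (y - 1)) t :> 2 * C"
  by (auto intro!: derivative_eq_intros)

lemma hyperbolic_derivatives:
  fixes C t :: real
  assumes "0 < t"
  shows "DERIV (\<lambda>y. C * (y - 1)^2 / y) t :> C * (1 - 1 / t^2)"
    and "DERIV (\<lambda>y. C * (1 - 1 / y^2)) t :> 2 * C / t^3"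
  using assms
  by (auto intro!: derivative_eq_intros simp: field_simps power2_eq_square power3_eq_cube)

text \<open>For q in (0,1] the exponent q - 2 lies in [-3, 0), so t powr (q-2) is sandwiched between 1 and
  1/t^3, in an order depending on the side of 1 on which t lies.\<close>
lemma powr_q_minus_2_bounds:
  fixes q t :: real
  assumes "0 < q" and "q \<le> 1" and "0 < t"
  shows "t \<le> 1 \<Longrightarrow> 1 \<le> t powr (q - 2) \<and> t powr (q - 2) \<le> 1 / t^3"
    and "1 \<le> t \<Longrightarrow> 1 / t^3 \<le> t powr (q - 2) \<and> t powr (q - 2) \<le> 1"
proof -
  have cube: "1 / t^3 = t powr (-3)" using assms by (simp add: powr_minus powr_realpow divide_inverse)
  show "t \<le> 1 \<Longrightarrow> 1 \<le> t powr (q - 2) \<and> t powr (q - 2) \<le> 1 / t^3"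
    unfolding cube using assms powr_mono'[of "q - 2" 0 t] powr_mono'[of "-3" "q - 2" t] by auto
  show "1 \<le> t \<Longrightarrow> 1 / t^3 \<le> t powr (q - 2) \<and> t powr (q - 2) \<le> 1"
    unfolding cube using assms powr_mono[of "-3" "q - 2" t] powr_mono[of "q - 2" 0 t] by auto
qed

lemma jensen_defect_bounds:
  fixes q x :: real
  assumes q: "0 < q" "q \<le> 1" and "0 < x"
  defines "C \<equiv> q * (1 - q) / 2"
  shows "C * (x - 1)^2 / max 1 x \<le> jensen_defect q x"
    and "jensen_defect q x \<le> C * (x - 1)^2 / min 1 x"
proof -
  let ?I = "{min 1 x..max 1 x}"
  have pos: "0 < t" if "t \<in> ?I" for t using that \<open>0 < x\<close> by auto
  have qq: "0 \<le> q * (1 - q)" and twoC: "2 * C = q * (1 - q)" using q by (auto simp: C_def)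
  note f = jensen_defect_derivatives[OF pos]
  note quad = quadratic_derivatives[of C]
  note hyp = hyperbolic_derivatives[OF pos, of _ C]
  show "C * (x - 1)^2 / max 1 x \<le> jensen_defect q x"
  proof (cases "x \<le> 1")
    case True
    have "C * (x - 1)^2 \<le> jensen_defect q x"
    proof (rule second_order_comparison[OF quad f])
      fix t assume "t \<in> ?I"
      with True pos powr_q_minus_2_bounds(1)[OF q] have "1 \<le> t powr (q - 2)" by auto
      then show "2 * C \<le> q * (1 - q) * t powr (q - 2)"
        using qq mult_left_mono[of 1 "t powr (q - 2)" "q * (1 - q)"] by (simp add: twoC)
    qed (auto simp: jensen_defect_def)
    then show ?thesis using True by simp
  next
    case False
    have "C * (x - 1)^2 / x \<le> jensen_defect q x"
    proof (rule second_order_comparison[OF hyp f])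
      fix t assume "t \<in> ?I"
      with False pos powr_q_minus_2_bounds(2)[OF q] have "1 / t^3 \<le> t powr (q - 2)" by auto
      then show "2 * C / t^3 \<le> q * (1 - q) * t powr (q - 2)"
        using qq mult_left_mono[of "1 / t^3" "t powr (q - 2)" "q * (1 - q)"] by (simp add: twoC)
    qed (auto simp: jensen_defect_def)
    then show ?thesis using False by simp
  qed
  show "jensen_defect q x \<le> C * (x - 1)^2 / min 1 x"
  proof (cases "x \<le> 1")
    case True
    have "jensen_defect q x \<le> C * (x - 1)^2 / x"
    proof (rule second_order_comparison[OF f hyp])
      fix t assume "t \<in> ?I"
      with True pos powr_q_minus_2_bounds(1)[OF q] have "t powr (q - 2) \<le> 1 / t^3" by auto
      then show "q * (1 - q) * t powr (q - 2) \<le> 2 * C / t^3"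
        using qq mult_left_mono[of "t powr (q - 2)" "1 / t^3" "q * (1 - q)"] by (simp add: twoC)
    qed (auto simp: jensen_defect_def)
    then show ?thesis using True by simp
  next
    case False
    have "jensen_defect q x \<le> C * (x - 1)^2"
    proof (rule second_order_comparison[OF f quad])
      fix t assume "t \<in> ?I"
      with False pos powr_q_minus_2_bounds(2)[OF q] have "t powr (q - 2) \<le> 1" by auto
      then show "q * (1 - q) * t powr (q - 2) \<le> 2 * C"
        using qq mult_left_mono[of "t powr (q - 2)" 1 "q * (1 - q)"] by (simp add: twoC)
    qed (auto simp: jensen_defect_def)
    then show ?thesis using False by simp
  qed
qed

lemma weighted_jensen_defect_bounds:
  fixes I :: "'i set" and p x :: "'i \<Rightarrow> real" and q m M :: real
  assumes "finite I" and q: "0 < q" "q \<le> 1"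
    and p: "\<And>i. i \<in> I \<Longrightarrow> 0 < p i" and x: "\<And>i. i \<in> I \<Longrightarrow> 0 < x i"
    and m: "0 < m" "m \<le> 1" "\<And>i. i \<in> I \<Longrightarrow> m \<le> x i"
    and M: "1 \<le> M" "\<And>i. i \<in> I \<Longrightarrow> x i \<le> M"
    and mean: "(\<Sum>i\<in>I. p i * x i) = (\<Sum>i\<in>I. p i)"
  defines "C \<equiv> q * (1 - q) / 2" and "V \<equiv> \<Sum>i\<in>I. p i * (x i - 1)^2"
  shows "C * V / M \<le> (\<Sum>i\<in>I. p i) - (\<Sum>i\<in>I. p i * x i powr q)"
    and "(\<Sum>i\<in>I. p i) - (\<Sum>i\<in>I. p i * x i powr q) \<le> C * V / m"
proof -
  have defect_sum: "(\<Sum>i\<in>I. p i * jensen_defect q (x i)) = (\<Sum>i\<in>I. p i) - (\<Sum>i\<in>I. p i * x i powr q)"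
    using mean by (simp add: jensen_defect_def algebra_simps sum.distrib sum_subtractf sum_distrib_left[symmetric])
  have C: "0 \<le> C * (x i - 1)^2" for i using q by (simp add: C_def)
  have "C * V / M = (\<Sum>i\<in>I. p i * (C * (x i - 1)^2 / M))"
    by (simp add: V_def sum_distrib_left sum_divide_distrib algebra_simps)
  also have "\<dots> \<le> (\<Sum>i\<in>I. p i * jensen_defect q (x i))"
  proof (intro sum_mono mult_left_mono)
    fix i assume i: "i \<in> I"
    have "C * (x i - 1)^2 / M \<le> C * (x i - 1)^2 / max 1 (x i)"
      using C M i by (intro divide_left_mono) auto
    also have "\<dots> \<le> jensen_defect q (x i)" using jensen_defect_bounds(1)[OF q x[OF i]] by (simp add: C_def)
    finally show "C * (x i - 1)^2 / M \<le> jensen_defect q (x i)" .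
  qed (use p in \<open>simp add: less_imp_le\<close>)
  finally show "C * V / M \<le> (\<Sum>i\<in>I. p i) - (\<Sum>i\<in>I. p i * x i powr q)" using defect_sum by simp
  have "(\<Sum>i\<in>I. p i * jensen_defect q (x i)) \<le> (\<Sum>i\<in>I. p i * (C * (x i - 1)^2 / m))"
  proof (intro sum_mono mult_left_mono)
    fix i assume i: "i \<in> I"
    have "jensen_defect q (x i) \<le> C * (x i - 1)^2 / min 1 (x i)"
      using jensen_defect_bounds(2)[OF q x[OF i]] by (simp add: C_def)
    also have "\<dots> \<le> C * (x i - 1)^2 / m"
      using C m x[OF i] i by (intro divide_left_mono) auto
    finally show "jensen_defect q (x i) \<le> C * (x i - 1)^2 / m" .
  qed (use p in \<open>simp add: less_imp_le\<close>)
  also have "\<dots> = C * V / m"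
    by (simp add: V_def sum_distrib_left sum_divide_distrib algebra_simps)
  finally show "(\<Sum>i\<in>I. p i) - (\<Sum>i\<in>I. p i * x i powr q) \<le> C * V / m" using defect_sum by simp
qed

lemma power_mean_powr:
  fixes n :: nat and a p :: "nat \<Rightarrow> real" and t :: real
  assumes "t \<noteq> 0" and "\<And>i. i \<in> {1..n} \<Longrightarrow> 0 \<le> p i"
  shows "power_mean n t a p powr t = (\<Sum>i=1..n. p i * a i powr t) / (\<Sum>i=1..n. p i)"
proof -
  have "0 \<le> (\<Sum>i=1..n. p i * a i powr t)" and "0 \<le> (\<Sum>i=1..n. p i)"
    using assms(2) by (auto intro!: sum_nonneg)
  then show ?thesis using assms(1) by (simp add: power_mean_def powr_powr)
qed

lemma weighted_sums_pos:
  fixes n :: nat and a p :: "nat \<Rightarrow> real" and t :: real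
  assumes "n \<ge> 1" and "\<And>i. i \<in> {1..n} \<Longrightarrow> 0 < a i" and "\<And>i. i \<in> {1..n} \<Longrightarrow> 0 < p i"
  shows "0 < (\<Sum>i=1..n. p i * a i powr t)" and "0 < (\<Sum>i=1..n. p i)"
proof -
  have "{1..n} \<noteq> {}" using assms(1) by simp
  moreover have "0 < p i * a i powr t" and "0 < p i" if "i \<in> {1..n}" for i
    using assms(2,3)[OF that] by simp_all
  ultimately show "0 < (\<Sum>i=1..n. p i * a i powr t)" and "0 < (\<Sum>i=1..n. p i)"
    by (auto intro!: sum_pos)
qed

lemma power_mean_pos:
  fixes n :: nat and a p :: "nat \<Rightarrow> real" and t :: real
  assumes "n \<ge> 1" and "\<And>i. i \<in> {1..n} \<Longrightarrow> 0 < a i" and "\<And>i. i \<in> {1..n} \<Longrightarrow> 0 < p i"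
  shows "0 < power_mean n t a p"
  using weighted_sums_pos(1)[where a = a and p = p and t = t, OF assms]
    weighted_sums_pos(2)[where a = a and p = p, OF assms] by (simp add: power_mean_def)

lemma power_mean_rescaled:
  fixes n :: nat and a p :: "nat \<Rightarrow> real" and r s :: real
  assumes "n \<ge> 1" and a: "\<And>i. i \<in> {1..n} \<Longrightarrow> 0 < a i" and p: "\<And>i. i \<in> {1..n} \<Longrightarrow> 0 < p i"
    and "0 < r" and "0 < s"
  defines "Ms \<equiv> power_mean n s a p"
  defines "x \<equiv> \<lambda>i. a i powr s / Ms powr s"
  shows "\<And>i. i \<in> {1..n} \<Longrightarrow> 0 < x i"
    and "(\<Sum>i=1..n. p i * x i) = (\<Sum>i=1..n. p i)"
    and "Ms powr r - power_mean n r a p powr r =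
           Ms powr r / (\<Sum>i=1..n. p i) * ((\<Sum>i=1..n. p i) - (\<Sum>i=1..n. p i * x i powr (r / s)))"
proof -
  have Ms: "0 < Ms" unfolding Ms_def using assms(1) a p by (rule power_mean_pos)
  then show "\<And>i. i \<in> {1..n} \<Longrightarrow> 0 < x i" using a by (force simp: x_def)
  have powr_mean: "power_mean n t a p powr t = (\<Sum>i=1..n. p i * a i powr t) / (\<Sum>i=1..n. p i)"
    if "0 < t" for t using that p by (intro power_mean_powr) (auto intro: less_imp_le)
  have S: "0 < (\<Sum>i=1..n. p i)" using assms(1) a p by (rule weighted_sums_pos(2))
  have "(\<Sum>i=1..n. p i * x i) = (\<Sum>i=1..n. p i * a i powr s) / Ms powr s"
    by (simp add: x_def sum_divide_distrib)
  also have "\<dots> = (\<Sum>i=1..n. p i)"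
    using weighted_sums_pos(1)[where a = a and p = p and t = s, OF assms(1) a p] S
      powr_mean[OF \<open>0 < s\<close>] by (simp add: Ms_def)
  finally show "(\<Sum>i=1..n. p i * x i) = (\<Sum>i=1..n. p i)" .
  have "a i powr r = Ms powr r * x i powr (r / s)" if "i \<in> {1..n}" for i
    using a[OF that] Ms \<open>0 < s\<close> by (simp add: x_def powr_divide powr_powr)
  then have "(\<Sum>i=1..n. p i * a i powr r) = Ms powr r * (\<Sum>i=1..n. p i * x i powr (r / s))"
    by (simp add: sum_distrib_left algebra_simps)
  then show "Ms powr r - power_mean n r a p powr r =
      Ms powr r / (\<Sum>i=1..n. p i) * ((\<Sum>i=1..n. p i) - (\<Sum>i=1..n. p i * x i powr (r / s)))"
    using powr_mean[OF \<open>0 < r\<close>] S by (simp add: field_simps)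
qed

lemma Min_Max_insert_one:
  fixes I :: "'i set" and f :: "'i \<Rightarrow> real"
  assumes "finite I" and pos: "\<And>i. i \<in> I \<Longrightarrow> 0 < f i"
  defines "m \<equiv> Min (insert 1 (f ` I))" and "M \<equiv> Max (insert 1 (f ` I))"
  shows "0 < m" "m \<le> 1" "\<And>i. i \<in> I \<Longrightarrow> m \<le> f i"
    and "1 \<le> M" "\<And>i. i \<in> I \<Longrightarrow> f i \<le> M"
proof -
  have "m \<in> insert 1 (f ` I)" unfolding m_def by (intro Min_in) (simp_all add: \<open>finite I\<close>)
  then show "0 < m" using pos by auto
  show "m \<le> 1" unfolding m_def using \<open>finite I\<close> by (intro Min_le) auto
  show "m \<le> f i" if "i \<in> I" for i unfolding m_def using \<open>finite I\<close> that by (intro Min_le) auto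
  show "1 \<le> M" unfolding M_def using \<open>finite I\<close> by (intro Max_ge) auto
  show "f i \<le> M" if "i \<in> I" for i unfolding M_def using \<open>finite I\<close> that by (intro Max_ge) auto
qed

theorem mainTheorem2:
  fixes n :: nat and a p :: "nat \<Rightarrow> real" and r s :: real
  assumes "n \<ge> 1"
    and "\<And>i. i \<in> {1..n} \<Longrightarrow> a i > 0"
    and "\<And>i. i \<in> {1..n} \<Longrightarrow> p i > 0"
    and "0 < r" and "r \<le> s"
  defines "Ms \<equiv> power_mean n s a p"
    and "Mr \<equiv> power_mean n r a p"
  defines "A \<equiv> r * (s - r) / (2 * s^2) * Ms powr r *
      ((\<Sum>i=1..n. p i * (a i powr s / Ms powr s - 1)^2) / (\<Sum>i=1..n. p i))"
    and "m \<equiv> Min (insert 1 ((\<lambda>i. a i powr s / Ms powr s) ` {1..n}))"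
    and "M \<equiv> Max (insert 1 ((\<lambda>i. a i powr s / Ms powr s) ` {1..n}))"
  shows "A / M \<le> Ms powr r - Mr powr r \<and> Ms powr r - Mr powr r \<le> A / m"
proof -
  have s: "0 < s" using assms(4,5) by simp
  define x where "x = (\<lambda>i. a i powr s / Ms powr s)"
  define q where "q = r / s"
  define K where "K = Ms powr r / (\<Sum>i=1..n. p i)"
  have q: "0 < q" "q \<le> 1" using assms(4,5) s by (auto simp: q_def)
  have K: "0 < K"
    using power_mean_pos[where a = a and p = p and t = s, OF assms(1-3)]
      weighted_sums_pos(2)[where a = a and p = p, OF assms(1-3)]
    by (simp add: K_def Ms_def)
  note rescaled = power_mean_rescaled[where a = a and p = p and r = r and s = s, OF assms(1-4) s]
  have x: "\<And>i. i \<in> {1..n} \<Longrightarrow> 0 < x i"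
    and mean: "(\<Sum>i=1..n. p i * x i) = (\<Sum>i=1..n. p i)"
    and gap: "Ms powr r - Mr powr r = K * ((\<Sum>i=1..n. p i) - (\<Sum>i=1..n. p i * x i powr q))"
    using rescaled by (simp_all add: x_def Ms_def Mr_def q_def K_def)
  define V where "V = (\<Sum>i=1..n. p i * (x i - 1)^2)"
  have A: "A = K * (q * (1 - q) / 2 * V)"
    using s by (simp add: A_def K_def V_def q_def x_def field_simps power2_eq_square)
  have "m = Min (insert 1 (x ` {1..n}))" "M = Max (insert 1 (x ` {1..n}))"
    by (simp_all add: m_def M_def x_def)
  note extremes = Min_Max_insert_one[where f = x, OF finite_atLeastAtMost[of 1 n] x, folded this]
  have bounds:
      "q * (1 - q) / 2 * V / M \<le> (\<Sum>i=1..n. p i) - (\<Sum>i=1..n. p i * x i powr q)"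
      "(\<Sum>i=1..n. p i) - (\<Sum>i=1..n. p i * x i powr q) \<le> q * (1 - q) / 2 * V / m"
    unfolding V_def
    by (rule weighted_jensen_defect_bounds[where m = m and M = M]; use q assms(3) x extremes mean in simp)+
  have "A / M = K * (q * (1 - q) / 2 * V / M)" by (simp add: A)
  also have "\<dots> \<le> Ms powr r - Mr powr r"
    unfolding gap using bounds(1) by (rule mult_left_mono) (use K in simp)
  finally have lower: "A / M \<le> Ms powr r - Mr powr r" .
  have "Ms powr r - Mr powr r \<le> K * (q * (1 - q) / 2 * V / m)"
    unfolding gap using bounds(2) by (rule mult_left_mono) (use K in simp)
  also have "\<dots> = A / m" by (simp add: A)
  finally show ?thesis using lower by simp
qed

end
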